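(* Let $K=\mathbb{Z}/3$ and let $G$ be a simple graph with $s\ge1$ edges that has no Eulerian subgraph with an even (positive) number of edges. Then for every $d\ge0$, $$\dim_K C_X(d)=\sum_{i\ge0}\binom{s}{d-2i},$$ where $\binom{s}{k}=0$ for $k<0$.
   Context: Let $G$ have vertex set $\{1,\dots,n\}$ and edges $e_1,\dots,e_s$, identified with variables of $S=K[t_1,\dots,t_s]$, $K$ a finite field. Let $X\subseteq\mathbb{P}^{s-1}$ be the image of the projective torus $\{(x_1:\dots:x_n): x_i\neq0\}\subseteq\mathbb{P}^{n-1}$ under the map whose $k$-th coordinate is $x_ix_j$ when $e_k=\{i,j\}$. Order $X=\{P_1,\dots,P_m\}$. For $d\ge0$, $C_X(d)\subseteq K^m$ is the image of the space $S_d$ of degree-$d$ forms under $f\mapsto \big(f(P_1)/t_1^d(P_1),\dots,f(P_m)/t_1^d(P_m)\big)$. An Eulerian subgraph is a subgraph in which every vertex has even degree. *)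

theory Defs
  imports "HOL-Analysis.Analysis" "HOL-Library.Function_Algebras"
begin

interpretation fun_vs: vector_space "\<lambda>(c::'k::field) (f::'x \<Rightarrow> 'k) x. c * f x"
  by unfold_locales (auto simp: fun_eq_iff algebra_simps)

text \<open>Simple graph on vertex set {1..n} with edges e_1..e_s, stored as E 0, ..., E (s-1).\<close>
definition simple_graph :: "nat \<Rightarrow> nat \<Rightarrow> (nat \<Rightarrow> nat set) \<Rightarrow> bool" where
  "simple_graph n s E \<longleftrightarrow> (\<forall>k<s. E k \<subseteq> {1..n} \<and> card (E k) = 2) \<and> inj_on E {..<s}"

definition eulerian_edge_set :: "nat \<Rightarrow> nat \<Rightarrow> (nat \<Rightarrow> nat set) \<Rightarrow> nat set \<Rightarrow> bool" where
  "eulerian_edge_set n s E I \<longleftrightarrow> I \<subseteq> {..<s} \<and> (\<forall>v\<in>{1..n}. even (card {k\<in>I. v \<in> E k}))"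

definition proj_class :: "(nat \<Rightarrow> 'k::field) \<Rightarrow> (nat \<Rightarrow> 'k) set" where
  "proj_class v = {w. \<exists>c. c \<noteq> 0 \<and> w = (\<lambda>k. c * v k)}"

definition torus :: "nat \<Rightarrow> (nat \<Rightarrow> 'k::field) set" where
  "torus n = {x. \<forall>i\<in>{1..n}. x i \<noteq> 0}"

definition edge_point :: "nat \<Rightarrow> (nat \<Rightarrow> nat set) \<Rightarrow> (nat \<Rightarrow> 'k::field) \<Rightarrow> nat \<Rightarrow> 'k" where
  "edge_point s E x = (\<lambda>k. if k < s then (\<Prod>v\<in>E k. x v) else 0)"

definition proj_X :: "nat \<Rightarrow> nat \<Rightarrow> (nat \<Rightarrow> nat set) \<Rightarrow> (nat \<Rightarrow> 'k::field) set set" where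
  "proj_X n s E = proj_class ` (edge_point s E ` torus n)"

text \<open>Exponent vectors of monomials of degree d in t_1..t_s (t_{k+1} has index k).\<close>
definition monomials :: "nat \<Rightarrow> nat \<Rightarrow> (nat \<Rightarrow> nat) set" where
  "monomials s d = {a. (\<forall>k\<ge>s. a k = 0) \<and> (\<Sum>k<s. a k) = d}"

definition eval_form :: "nat \<Rightarrow> nat \<Rightarrow> ((nat \<Rightarrow> nat) \<Rightarrow> 'k::field) \<Rightarrow> (nat \<Rightarrow> 'k) \<Rightarrow> 'k" where
  "eval_form s d c v = (\<Sum>a\<in>monomials s d. c a * (\<Prod>k<s. v k ^ a k))"

text \<open>The code C_X(d): vectors indexed by the points of X (zero outside X),
  f \<mapsto> (f(P)/t_1^d(P))_{P \<in> X}, computed on a representative of P.\<close>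
definition code_CX :: "nat \<Rightarrow> nat \<Rightarrow> (nat \<Rightarrow> nat set) \<Rightarrow> nat \<Rightarrow> ((nat \<Rightarrow> 'k::field) set \<Rightarrow> 'k) set" where
  "code_CX n s E d = {(\<lambda>P. if P \<in> proj_X n s E
        then eval_form s d c (SOME v. v \<in> P) / ((SOME v. v \<in> P) 0) ^ d else 0) | c. True}"

end

theory Submission
  imports Defs
begin

text \<open>Over \<open>\<int>/3\<close> every nonzero value squares to \<open>1\<close>, so on \<open>X\<close> a monomial
  \<open>t\<^sup>a / t\<^sub>1\<^sup>d\<close> equals the squarefree ratio \<open>\<Prod>\<^sub>k\<^sub>\<in>\<^sub>S t\<^sub>k / t\<^sub>1\<close>, where \<open>S\<close> is the set of
  odd exponents of \<open>a\<close>; these \<open>S\<close> are exactly the sets of edges with \<open>|S| \<le> d\<close> and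
  \<open>|S| \<equiv> d (mod 2)\<close>, so they span \<open>C\<^sub>X(d)\<close>. They are also linearly independent: evaluate at
  the images of the points of \<open>{\<plusminus>1}\<^sup>n\<close> and pair functions by summing products. A ratio
  squares to \<open>1\<close> there, so its norm is \<open>2\<^sup>n \<noteq> 0\<close>. For \<open>S \<noteq> S'\<close> the symmetric difference is a
  nonempty edge set of even size, hence not Eulerian; flipping the sign of \<open>x\<^sub>v\<close> at a vertex
  \<open>v\<close> of odd degree in it negates the product of the two ratios, so the pairing vanishes.\<close>

lemma sum_fun_apply: "sum f A x = (\<Sum>a\<in>A. f a x)"
  by (induction A rule: infinite_finite_induct) auto

context module
begin

lemma span_image_finite:
  assumes "finite A"
  shows "span (f ` A) = range (\<lambda>c. \<Sum>a\<in>A. c a *s f a)"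
proof
  show "range (\<lambda>c. \<Sum>a\<in>A. c a *s f a) \<subseteq> span (f ` A)"
    by (auto intro!: span_sum[OF span_scale[OF span_base]])
  have "subspace (range (\<lambda>c. \<Sum>a\<in>A. c a *s f a))"
    unfolding subspace_def
  proof (intro conjI ballI allI)
    show "0 \<in> range (\<lambda>c. \<Sum>a\<in>A. c a *s f a)"
      by (rule image_eqI[of _ _ "\<lambda>_. 0"]) auto
  next
    fix x y
    assume "x \<in> range (\<lambda>c. \<Sum>a\<in>A. c a *s f a)" "y \<in> range (\<lambda>c. \<Sum>a\<in>A. c a *s f a)"
    then obtain cx cy where "x = (\<Sum>a\<in>A. cx a *s f a)" "y = (\<Sum>a\<in>A. cy a *s f a)"
      by blast
    then show "x + y \<in> range (\<lambda>c. \<Sum>a\<in>A. c a *s f a)"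
      by (intro image_eqI[of _ _ "\<lambda>a. cx a + cy a"]) (auto simp: scale_left_distrib sum.distrib)
  next
    fix r x
    assume "x \<in> range (\<lambda>c. \<Sum>a\<in>A. c a *s f a)"
    then obtain c where "x = (\<Sum>a\<in>A. c a *s f a)"
      by blast
    then show "r *s x \<in> range (\<lambda>c. \<Sum>a\<in>A. c a *s f a)"
      by (intro image_eqI[of _ _ "\<lambda>a. r * c a"]) (auto simp: scale_sum_right)
  qed
  moreover have "f ` A \<subseteq> range (\<lambda>c. \<Sum>a\<in>A. c a *s f a)"
  proof
    fix v
    assume "v \<in> f ` A"
    then obtain b where "b \<in> A" "v = f b"
      by blast
    then show "v \<in> range (\<lambda>c. \<Sum>a\<in>A. c a *s f a)"
      using assms by (intro image_eqI[of _ _ "\<lambda>a. if a = b then 1 else 0"])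
        (simp add: if_distrib[of "\<lambda>r. scale r x" for x] sum.delta' cong: if_cong)+
  qed
  ultimately show "span (f ` A) \<subseteq> range (\<lambda>c. \<Sum>a\<in>A. c a *s f a)"
    by (rule span_minimal[rotated])
qed

end

lemma fun_vs_orthogonal_family:
  fixes g :: "'i \<Rightarrow> 'x \<Rightarrow> 'k::field" and p :: "'t \<Rightarrow> 'x"
  assumes orth: "\<And>i j. i \<in> I \<Longrightarrow> j \<in> I \<Longrightarrow>
      (\<Sum>t\<in>T. g i (p t) * g j (p t)) = (if i = j then N else 0)"
    and "N \<noteq> 0"
  shows fun_vs_orthogonal_family_inj: "inj_on g I"
    and fun_vs_orthogonal_family_independent: "fun_vs.independent (g ` I)"
proof -
  show "inj_on g I"
  proof (rule inj_onI, rule ccontr)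
    fix i j
    assume "i \<in> I" "j \<in> I" "g i = g j" "i \<noteq> j"
    then show False
      using orth[of i j] orth[of i i] \<open>N \<noteq> 0\<close> by simp
  qed
  show "fun_vs.independent (g ` I)"
    unfolding fun_vs.independent_explicit_module
  proof (intro allI impI)
    fix F u f
    assume "finite F" "F \<subseteq> g ` I" and comb: "(\<Sum>h\<in>F. (\<lambda>x. u h * h x)) = 0" and "f \<in> F"
    then obtain i where i: "i \<in> I" "f = g i"
      by blast
    have pair: "(\<Sum>t\<in>T. h (p t) * f (p t)) = (if h = f then N else 0)" if hF: "h \<in> F" for h
    proof -
      obtain j where "j \<in> I" "h = g j"
        using hF \<open>F \<subseteq> g ` I\<close> by blast
      then show ?thesis
        using orth[of j i] orth[of i i] i by auto
    qed
    have "0 = (\<Sum>t\<in>T. (\<Sum>h\<in>F. u h * h (p t)) * f (p t))"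
      using fun_cong[OF comb] by (simp add: sum_fun_apply)
    also have "\<dots> = (\<Sum>h\<in>F. u h * (\<Sum>t\<in>T. h (p t) * f (p t)))"
      by (simp add: sum_distrib_right sum_distrib_left mult.assoc sum.swap[of _ T])
    also have "\<dots> = (\<Sum>h\<in>F. if h = f then u h * N else 0)"
      by (rule sum.cong) (simp_all add: pair)
    also have "\<dots> = u f * N"
      using \<open>finite F\<close> \<open>f \<in> F\<close> by simp
    finally show "u f = 0"
      using \<open>N \<noteq> 0\<close> by simp
  qed
qed

lemma sum_sign_reversing_involution:
  fixes h :: "'a \<Rightarrow> 'b::idom"
  assumes "\<And>x. x \<in> A \<Longrightarrow> \<sigma> x \<in> A" "\<And>x. x \<in> A \<Longrightarrow> \<sigma> (\<sigma> x) = x"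
    and "\<And>x. x \<in> A \<Longrightarrow> h (\<sigma> x) = - h x" and "(2::'b) \<noteq> 0"
  shows "sum h A = 0"
proof -
  have "sum h A = sum (h \<circ> \<sigma>) A"
    by (rule sum.reindex_bij_witness[of _ \<sigma> \<sigma>]) (simp_all add: assms(1,2))
  also have "\<dots> = - sum h A"
    using assms(3) by (simp add: sum_negf)
  finally have "sum h A + sum h A = 0"
    by (rule eq_neg_iff_add_eq_0[THEN iffD1])
  then have "2 * sum h A = 0"
    by (simp only: mult_2)
  then show ?thesis
    using assms(4) by simp
qed

lemma card_add_card_eq_sym_diff:
  assumes "finite A" "finite B"
  shows "card A + card B = card ((A - B) \<union> (B - A)) + 2 * card (A \<inter> B)"
proof -
  have "card ((A - B) \<union> (B - A)) = card (A - B) + card (B - A)"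
    by (rule card_Un_disjoint) (use assms in auto)
  moreover have "card A = card (A \<inter> B) + card (A - B)" "card B = card (A \<inter> B) + card (B - A)"
    using assms card_Int_Diff[of A B] card_Int_Diff[of B A] by (auto simp: Int_commute)
  ultimately show ?thesis
    by simp
qed

lemma card3_field:
  assumes "CARD('k::field) = 3"
  shows card3_field_one_neq_minus_one: "(1::'k) \<noteq> -1"
    and card3_field_UNIV: "(UNIV::'k set) = {0, 1, -1}"
proof -
  have fin: "finite (UNIV::'k set)"
    using assms card.infinite by fastforce
  have "card {0::'k, 1} < card (UNIV::'k set)"
    using assms by (simp add: card_insert_le_m1 le_less_trans)
  then have "\<not> UNIV \<subseteq> {0::'k, 1}"
    using card_mono[of "{0::'k, 1}" UNIV] by auto
  then obtain z :: 'k where z: "z \<notin> {0, 1}"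
    by blast
  have "card {0, 1, z} = 3"
    using z by simp
  then have U: "(UNIV::'k set) = {0, 1, z}"
    using assms fin by (metis card_subset_eq subset_UNIV)
  show one: "(1::'k) \<noteq> -1"
  proof
    assume "(1::'k) = -1"
    moreover have "z + 1 \<in> {0, 1, z}"
      using U by blast
    ultimately show False
      using z by (auto simp: add_eq_0_iff2)
  qed
  have "card {0, 1, -1::'k} = 3"
    using one by (simp add: eq_neg_iff_add_eq_0)
  then show "(UNIV::'k set) = {0, 1, -1}"
    using assms fin by (metis card_subset_eq subset_UNIV)
qed

lemma card3_field_two_neq_zero: "CARD('k::field) = 3 \<Longrightarrow> (2::'k) \<noteq> 0"
  using card3_field_one_neq_minus_one by (metis eq_neg_iff_add_eq_0 one_add_one)

lemma card3_field_square:
  assumes "CARD('k::field) = 3" "(y::'k) \<noteq> 0"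
  shows "y\<^sup>2 = 1"
proof -
  have "y \<in> {1, -1}"
    using card3_field_UNIV[OF assms(1)] assms(2) by blast
  then show ?thesis
    by auto
qed

definition proj_rep :: "(nat \<Rightarrow> 'k) set \<Rightarrow> nat \<Rightarrow> 'k" where
  "proj_rep P = (SOME v. v \<in> P)"

lemma proj_rep_proj_class:
  fixes w :: "nat \<Rightarrow> 'k::field"
  obtains c where "c \<noteq> 0" "proj_rep (proj_class w) = (\<lambda>k. c * w k)"
proof -
  have "w \<in> proj_class w"
    unfolding proj_class_def by (auto intro: exI[of _ 1])
  then have "proj_rep (proj_class w) \<in> proj_class w"
    unfolding proj_rep_def by (rule someI[of "\<lambda>v. v \<in> proj_class w"])
  then show ?thesis
    using that unfolding proj_class_def by blast
qed

lemma proj_rep_ratio: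
  fixes w :: "nat \<Rightarrow> 'k::field"
  assumes "w 0 \<noteq> 0"
  shows "proj_rep (proj_class w) k / proj_rep (proj_class w) 0 = w k / w 0"
proof -
  obtain c where "c \<noteq> 0" "proj_rep (proj_class w) = (\<lambda>k. c * w k)"
    by (rule proj_rep_proj_class)
  then show ?thesis
    using assms by simp
qed

lemma simple_graph_edge:
  assumes "simple_graph n s E" "k < s"
  shows "finite (E k)" "E k \<subseteq> {1..n}"
  using assms unfolding simple_graph_def by (auto intro: card_ge_0_finite)

lemma edge_point_nonzero:
  assumes "simple_graph n s E" "k < s" "x \<in> torus n"
  shows "edge_point s E x k \<noteq> (0::'k::field)"
  using simple_graph_edge[OF assms(1,2)] assms(2,3) unfolding edge_point_def torus_def
  by (auto simp: prod_zero_iff)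

lemma edge_point_flip:
  assumes "simple_graph n s E" "k < s"
  shows "edge_point s E (x(v := - x v)) k
    = (if v \<in> E k then -1 else 1) * edge_point s E (x::nat \<Rightarrow> 'k::field) k"
proof -
  have "(x(v := - x v)) w = (if w = v then -1 else 1) * x w" for w
    by simp
  then have "(\<Prod>w\<in>E k. (x(v := - x v)) w) = (\<Prod>w\<in>E k. if w = v then -1 else 1) * (\<Prod>w\<in>E k. x w)"
    by (simp add: prod.distrib)
  then show ?thesis
    using assms(2) simple_graph_edge(1)[OF assms] by (simp add: edge_point_def prod.delta)
qed

definition sign_torus :: "nat \<Rightarrow> (nat \<Rightarrow> 'k::field) set" where
  "sign_torus n = PiE {1..n} (\<lambda>_. {1, -1})"

lemma sign_torus_subset_torus: "sign_torus n \<subseteq> torus n"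
proof
  fix x :: "nat \<Rightarrow> 'k::field"
  assume "x \<in> sign_torus n"
  then have "x i \<in> {1, -1}" if "i \<in> {1..n}" for i
    using that unfolding sign_torus_def by blast
  then show "x \<in> torus n"
    unfolding torus_def by fastforce
qed

lemma sign_torus_flip: "x \<in> sign_torus n \<Longrightarrow> v \<in> {1..n} \<Longrightarrow> x(v := - x v) \<in> sign_torus n"
  unfolding sign_torus_def by (auto simp: PiE_iff extensional_def)

lemma card_sign_torus:
  assumes "(1::'k::field) \<noteq> -1"
  shows "card (sign_torus n :: (nat \<Rightarrow> 'k) set) = 2 ^ n"
  using assms by (simp add: sign_torus_def card_PiE numeral_2_eq_2)

lemma edge_point_sign_torus_square:
  assumes "simple_graph n s E" "k < s" "x \<in> sign_torus n"
  shows "(edge_point s E x k)\<^sup>2 = (1::'k::field)"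
proof -
  have "(x w)\<^sup>2 = 1" if "w \<in> E k" for w
  proof -
    have "w \<in> {1..n}"
      using that simple_graph_edge(2)[OF assms(1,2)] by blast
    then have "x w \<in> {1, -1}"
      using assms(3) unfolding sign_torus_def by blast
    then show ?thesis
      by auto
  qed
  then show ?thesis
    using assms(2) by (simp add: edge_point_def prod_power_distrib)
qed

definition affine_ratio_monomial :: "nat \<Rightarrow> (nat \<Rightarrow> nat set) \<Rightarrow> nat set \<Rightarrow> (nat \<Rightarrow> 'k::field) \<Rightarrow> 'k" where
  "affine_ratio_monomial s E S x = (\<Prod>k\<in>S. edge_point s E x k / edge_point s E x 0)"

definition ratio_monomial ::
    "nat \<Rightarrow> nat \<Rightarrow> (nat \<Rightarrow> nat set) \<Rightarrow> nat set \<Rightarrow> (nat \<Rightarrow> 'k::field) set \<Rightarrow> 'k" where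
  "ratio_monomial n s E S P =
    (if P \<in> proj_X n s E then \<Prod>k\<in>S. proj_rep P k / proj_rep P 0 else 0)"

lemma ratio_monomial_edge_point:
  assumes "simple_graph n s E" "0 < s" "x \<in> torus n"
  shows "ratio_monomial n s E S (proj_class (edge_point s E x))
    = affine_ratio_monomial s E S (x::nat \<Rightarrow> 'k::field)"
proof -
  have "proj_class (edge_point s E x) \<in> proj_X n s E"
    unfolding proj_X_def using assms(3) by blast
  moreover have "edge_point s E x 0 \<noteq> 0"
    by (rule edge_point_nonzero[OF assms])
  ultimately show ?thesis
    by (simp add: ratio_monomial_def affine_ratio_monomial_def proj_rep_ratio)
qed

lemma affine_ratio_monomial_flip:
  assumes "simple_graph n s E" "0 < s" "S \<subseteq> {..<s}"
  shows "affine_ratio_monomial s E S (x(v := - x v))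
    = (-1) ^ card {k\<in>S. v \<in> E k} * (if v \<in> E 0 then -1 else 1) ^ card S
      * affine_ratio_monomial s E S (x::nat \<Rightarrow> 'k::field)"
proof -
  define \<sigma> where "\<sigma> k = (if v \<in> E k then -1 else (1::'k))" for k
  have "affine_ratio_monomial s E S (x(v := - x v))
      = (\<Prod>k\<in>S. (\<sigma> k * \<sigma> 0) * (edge_point s E x k / edge_point s E x 0))"
    unfolding affine_ratio_monomial_def
  proof (rule prod.cong)
    fix k
    assume "k \<in> S"
    then show "edge_point s E (x(v := - x v)) k / edge_point s E (x(v := - x v)) 0
        = \<sigma> k * \<sigma> 0 * (edge_point s E x k / edge_point s E x 0)"
      using edge_point_flip[OF assms(1), of k x v] edge_point_flip[OF assms(1) assms(2), of x v] assms(3)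
      by (auto simp: \<sigma>_def)
  qed simp
  also have "\<dots> = (\<Prod>k\<in>S. \<sigma> k) * \<sigma> 0 ^ card S * affine_ratio_monomial s E S x"
    by (simp only: affine_ratio_monomial_def prod.distrib prod_constant)
  also have "(\<Prod>k\<in>S. \<sigma> k) = (-1) ^ card {k\<in>S. v \<in> E k}"
    using finite_subset[OF assms(3)] by (simp add: \<sigma>_def prod.If_cases Int_def conj_commute)
  finally show ?thesis
    by (simp only: \<sigma>_def)
qed

lemma affine_ratio_monomial_sign_torus_square:
  assumes "simple_graph n s E" "0 < s" "S \<subseteq> {..<s}" "x \<in> sign_torus n"
  shows "(affine_ratio_monomial s E S x)\<^sup>2 = (1::'k::field)"
proof -
  have "(edge_point s E x k / edge_point s E x 0)\<^sup>2 = (1::'k)" if "k \<in> S" for k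
    using that assms edge_point_sign_torus_square[OF assms(1) _ assms(4)]
    by (auto simp: power_divide)
  then show ?thesis
    by (simp add: affine_ratio_monomial_def prod_power_distrib)
qed

definition parity_sets :: "nat \<Rightarrow> nat \<Rightarrow> nat set set" where
  "parity_sets s d = {S. S \<subseteq> {..<s} \<and> card S \<le> d \<and> even (d - card S)}"

lemma affine_ratio_monomial_orthogonal:
  assumes "simple_graph n s E" "0 < s" and two: "(2::'k::field) \<noteq> 0"
    and no_even_eulerian: "\<not> (\<exists>I. eulerian_edge_set n s E I \<and> I \<noteq> {} \<and> even (card I))"
    and "S \<in> parity_sets s d" "S' \<in> parity_sets s d" "S \<noteq> S'"
  shows "(\<Sum>x\<in>sign_torus n. affine_ratio_monomial s E S x * affine_ratio_monomial s E S' x) = (0::'k)"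
proof -
  define D where "D = (S - S') \<union> (S' - S)"
  have sub: "S \<subseteq> {..<s}" "S' \<subseteq> {..<s}"
    using assms(5,6) unfolding parity_sets_def by auto
  then have fin: "finite S" "finite S'"
    using finite_subset by blast+
  have even_sum: "even (card S + card S')"
    using assms(5,6) unfolding parity_sets_def by auto
  have "even (card D)"
    using card_add_card_eq_sym_diff[OF fin] even_sum unfolding D_def by presburger
  moreover have "D \<noteq> {}" "D \<subseteq> {..<s}"
    using \<open>S \<noteq> S'\<close> sub unfolding D_def by auto
  ultimately obtain v where v: "v \<in> {1..n}" "odd (card {k\<in>D. v \<in> E k})"
    using no_even_eulerian unfolding eulerian_edge_set_def by blast
  have "({k\<in>S. v \<in> E k} - {k\<in>S'. v \<in> E k}) \<union> ({k\<in>S'. v \<in> E k} - {k\<in>S. v \<in> E k})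
      = {k\<in>D. v \<in> E k}"
    unfolding D_def by blast
  then have "odd (card {k\<in>S. v \<in> E k} + card {k\<in>S'. v \<in> E k})"
    using card_add_card_eq_sym_diff[of "{k\<in>S. v \<in> E k}" "{k\<in>S'. v \<in> E k}"] fin v(2) by simp
  then have sign: "(-1::'k) ^ card {k\<in>S. v \<in> E k} * (-1) ^ card {k\<in>S'. v \<in> E k} = -1"
    by (simp add: power_add[symmetric])
  have sign0: "(if v \<in> E 0 then -1 else 1::'k) ^ card S * (if v \<in> E 0 then -1 else 1) ^ card S' = 1"
    using even_sum by (simp add: power_add[symmetric])
  show ?thesis
  proof (rule sum_sign_reversing_involution[where \<sigma>="\<lambda>x. x(v := - x v)", OF _ _ _ two])
    show "x(v := - x v) \<in> sign_torus n" if "x \<in> sign_torus n" for x :: "nat \<Rightarrow> 'k"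
      using sign_torus_flip[OF that v(1)] .
    show "(x(v := - x v))(v := - (x(v := - x v)) v) = x" for x :: "nat \<Rightarrow> 'k"
      by simp
    show "affine_ratio_monomial s E S (x(v := - x v)) * affine_ratio_monomial s E S' (x(v := - x v))
        = - (affine_ratio_monomial s E S x * affine_ratio_monomial s E S' x)" for x :: "nat \<Rightarrow> 'k"
      unfolding affine_ratio_monomial_flip[OF assms(1,2) sub(1)] affine_ratio_monomial_flip[OF assms(1,2) sub(2)]
      using sign sign0 by (simp add: algebra_simps)
  qed
qed

lemma ratio_monomial_orthonormal:
  assumes "simple_graph n s E" "0 < s" and two: "(2::'k::field) \<noteq> 0"
    and no_even_eulerian: "\<not> (\<exists>I. eulerian_edge_set n s E I \<and> I \<noteq> {} \<and> even (card I))"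
    and "S \<in> parity_sets s d" "S' \<in> parity_sets s d"
  shows "(\<Sum>x\<in>sign_torus n. ratio_monomial n s E S (proj_class (edge_point s E x))
      * ratio_monomial n s E S' (proj_class (edge_point s E x))) = (if S = S' then 2 ^ n else (0::'k))"
proof -
  have "(\<Sum>x\<in>sign_torus n. ratio_monomial n s E S (proj_class (edge_point s E x))
      * ratio_monomial n s E S' (proj_class (edge_point s E x)))
      = (\<Sum>x\<in>sign_torus n. affine_ratio_monomial s E S x * affine_ratio_monomial s E S' (x::nat \<Rightarrow> 'k))"
  proof (rule sum.cong[OF refl])
    fix x :: "nat \<Rightarrow> 'k"
    assume "x \<in> sign_torus n"
    then have "x \<in> torus n"
      using sign_torus_subset_torus by blast
    then show "ratio_monomial n s E S (proj_class (edge_point s E x))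
        * ratio_monomial n s E S' (proj_class (edge_point s E x))
        = affine_ratio_monomial s E S x * affine_ratio_monomial s E S' x"
      by (simp add: ratio_monomial_edge_point[OF assms(1,2)])
  qed
  also have "\<dots> = (if S = S' then 2 ^ n else 0)"
  proof (cases "S = S'")
    case True
    have "S \<subseteq> {..<s}"
      using assms(5) unfolding parity_sets_def by auto
    then have "affine_ratio_monomial s E S x * affine_ratio_monomial s E S x = (1::'k)"
      if "x \<in> sign_torus n" for x
      using affine_ratio_monomial_sign_torus_square[OF assms(1,2) _ that] by (simp add: power2_eq_square)
    moreover have "(1::'k) \<noteq> -1"
      using two by (metis eq_neg_iff_add_eq_0 one_add_one)
    then have "card (sign_torus n :: (nat \<Rightarrow> 'k) set) = 2 ^ n"
      by (rule card_sign_torus)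
    ultimately show ?thesis
      using True by simp
  next
    case False
    then show ?thesis
      using affine_ratio_monomial_orthogonal[OF assms] by simp
  qed
  finally show ?thesis .
qed

definition odd_exponents :: "nat \<Rightarrow> (nat \<Rightarrow> nat) \<Rightarrow> nat set" where
  "odd_exponents s a = {k\<in>{..<s}. odd (a k)}"

lemma finite_monomials: "finite (monomials s d)"
proof (rule finite_subset)
  show "monomials s d \<subseteq> {a. \<forall>k. (k \<in> {..<s} \<longrightarrow> a k \<in> {..d}) \<and> (k \<notin> {..<s} \<longrightarrow> a k = 0)}"
  proof (intro subsetI CollectI allI conjI impI)
    fix a k
    assume a: "a \<in> monomials s d" and k: "k \<in> {..<s}"
    have "a k \<le> (\<Sum>k<s. a k)"
      by (rule member_le_sum) (use k in auto)
    then show "a k \<in> {..d}"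
      using a unfolding monomials_def by simp
  next
    fix a k
    assume "a \<in> monomials s d" "k \<notin> {..<s}"
    then show "a k = 0"
      unfolding monomials_def by auto
  qed
  show "finite {a. \<forall>k. (k \<in> {..<s} \<longrightarrow> a k \<in> {..d}) \<and> (k \<notin> {..<s} \<longrightarrow> a k = 0)}"
    by (rule finite_set_of_finite_funs) auto
qed

lemma monomial_div_power_eq_prod_odd_exponents:
  fixes w :: "nat \<Rightarrow> 'k::field"
  assumes "\<And>k. k < s \<Longrightarrow> (w k / w 0)\<^sup>2 = 1"
  shows "(\<Prod>k<s. w k ^ a k) / w 0 ^ (\<Sum>k<s. a k) = (\<Prod>k\<in>odd_exponents s a. w k / w 0)"
proof -
  have "(\<Prod>k<s. w k ^ a k) / w 0 ^ (\<Sum>k<s. a k) = (\<Prod>k<s. (w k / w 0) ^ a k)"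
    by (simp add: power_sum prod_dividef power_divide)
  also have "\<dots> = (\<Prod>k<s. if odd (a k) then w k / w 0 else 1)"
  proof (rule prod.cong)
    fix k
    assume "k \<in> {..<s}"
    then have "((w k / w 0)\<^sup>2) ^ (a k div 2) = 1"
      using assms by simp
    then show "(w k / w 0) ^ a k = (if odd (a k) then w k / w 0 else 1)"
      by (cases "even (a k)") (auto elim!: evenE oddE simp: power_mult power_add)
  qed simp
  also have "\<dots> = (\<Prod>k\<in>odd_exponents s a. w k / w 0)"
    unfolding odd_exponents_def by (rule prod.inter_filter[symmetric]) simp
  finally show ?thesis .
qed

lemma odd_exponents_monomials:
  assumes "0 < s"
  shows "odd_exponents s ` monomials s d = parity_sets s d"
proof
  show "odd_exponents s ` monomials s d \<subseteq> parity_sets s d"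
  proof
    fix S
    assume "S \<in> odd_exponents s ` monomials s d"
    then obtain a where a: "a \<in> monomials s d" and S: "S = odd_exponents s a"
      by blast
    have d: "d = (\<Sum>k<s. a k)"
      using a unfolding monomials_def by simp
    have "card S = (\<Sum>k\<in>S. 1)"
      by simp
    also have "\<dots> \<le> (\<Sum>k\<in>S. a k)"
      by (rule sum_mono) (auto simp: S odd_exponents_def intro: Suc_leI odd_pos)
    also have "\<dots> \<le> d"
      unfolding d S by (rule sum_mono2) (auto simp: odd_exponents_def)
    finally have "card S \<le> d" .
    moreover have "even d \<longleftrightarrow> even (card S)"
      unfolding d S odd_exponents_def by (rule even_sum_iff) simp
    ultimately show "S \<in> parity_sets s d"
      unfolding parity_sets_def S odd_exponents_def by auto
  qed
  show "parity_sets s d \<subseteq> odd_exponents s ` monomials s d"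
  proof
    fix S
    assume "S \<in> parity_sets s d"
    then have S: "S \<subseteq> {..<s}" "card S \<le> d" "even (d - card S)"
      unfolding parity_sets_def by auto
    define a where "a k = (if k \<in> S then 1 else 0) + (if k = 0 then d - card S else 0)" for k
    have "(\<Sum>k<s. a k) = card S + (d - card S)"
      using S(1) assms by (simp add: a_def sum.distrib sum.If_cases Int_absorb1)
    then have "a \<in> monomials s d"
      using S assms unfolding monomials_def a_def by auto
    moreover have "odd_exponents s a = S"
      using S unfolding odd_exponents_def a_def by auto
    ultimately show "S \<in> odd_exponents s ` monomials s d"
      by blast
  qed
qed

lemma card_parity_sets: "card (parity_sets s d) = (\<Sum>i\<le>d div 2. s choose (d - 2 * i))"
proof -
  define A where "A i = {S. S \<subseteq> {..<s} \<and> card S = d - 2 * i}" for i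
  have "parity_sets s d = (\<Union>i\<le>d div 2. A i)"
  proof (intro equalityI subsetI)
    fix S
    assume "S \<in> parity_sets s d"
    then have S: "S \<subseteq> {..<s}" "card S \<le> d" "even (d - card S)"
      unfolding parity_sets_def by auto
    then obtain i where "d - card S = 2 * i"
      by blast
    then have "i \<le> d div 2" "card S = d - 2 * i"
      using S(2) by auto
    then show "S \<in> (\<Union>i\<le>d div 2. A i)"
      using S(1) unfolding A_def by auto
  next
    fix S
    assume "S \<in> (\<Union>i\<le>d div 2. A i)"
    then obtain i where "i \<le> d div 2" "S \<subseteq> {..<s}" "card S = d - 2 * i"
      unfolding A_def by auto
    then show "S \<in> parity_sets s d"
      unfolding parity_sets_def by auto
  qed
  also have "card \<dots> = (\<Sum>i\<le>d div 2. card (A i))"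
  proof (rule card_UN_disjoint)
    show "\<forall>i\<in>{..d div 2}. finite (A i)"
      unfolding A_def by (auto intro: finite_subset[of _ "Pow {..<s}"])
    show "\<forall>i\<in>{..d div 2}. \<forall>j\<in>{..d div 2}. i \<noteq> j \<longrightarrow> A i \<inter> A j = {}"
      unfolding A_def by auto
  qed simp
  also have "\<dots> = (\<Sum>i\<le>d div 2. s choose (d - 2 * i))"
    unfolding A_def by (rule sum.cong) (simp_all add: n_subsets)
  finally show ?thesis .
qed

lemma monomial_on_X_eq_ratio_monomial:
  assumes "CARD('k::field) = 3" "simple_graph n s E" "0 < s"
    and "P \<in> (proj_X n s E :: (nat \<Rightarrow> 'k) set set)" "a \<in> monomials s d"
  shows "(\<Prod>k<s. proj_rep P k ^ a k) / proj_rep P 0 ^ d = ratio_monomial n s E (odd_exponents s a) P"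
proof -
  obtain x where x: "x \<in> torus n" "P = proj_class (edge_point s E x)"
    using assms(4) unfolding proj_X_def by blast
  have "(proj_rep P k / proj_rep P 0)\<^sup>2 = 1" if "k < s" for k
    using x edge_point_nonzero[OF assms(2) that x(1)] edge_point_nonzero[OF assms(2,3) x(1)]
    by (simp add: proj_rep_ratio card3_field_square[OF assms(1)])
  moreover have "d = (\<Sum>k<s. a k)"
    using assms(5) unfolding monomials_def by simp
  ultimately show ?thesis
    using assms(4) monomial_div_power_eq_prod_odd_exponents[of s "proj_rep P" a]
    unfolding ratio_monomial_def by simp
qed

lemma code_CX_eq_span:
  assumes "CARD('k::field) = 3" "simple_graph n s E" "0 < s"
  shows "(code_CX n s E d :: ((nat \<Rightarrow> 'k) set \<Rightarrow> 'k) set)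
    = fun_vs.span (ratio_monomial n s E ` parity_sets s d)"
proof -
  have "(\<lambda>P. if P \<in> proj_X n s E then eval_form s d c (proj_rep P) / proj_rep P 0 ^ d else 0)
      = (\<Sum>a\<in>monomials s d. (\<lambda>P. c a * ratio_monomial n s E (odd_exponents s a) P))"
    for c :: "(nat \<Rightarrow> nat) \<Rightarrow> 'k"
  proof
    fix P :: "(nat \<Rightarrow> 'k) set"
    show "(if P \<in> proj_X n s E then eval_form s d c (proj_rep P) / proj_rep P 0 ^ d else 0)
        = (\<Sum>a\<in>monomials s d. (\<lambda>P. c a * ratio_monomial n s E (odd_exponents s a) P)) P"
    proof (cases "P \<in> proj_X n s E")
      case True
      have "(\<Sum>a\<in>monomials s d. c a * ((\<Prod>k<s. proj_rep P k ^ a k) / proj_rep P 0 ^ d))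
          = (\<Sum>a\<in>monomials s d. c a * ratio_monomial n s E (odd_exponents s a) P)"
        by (intro sum.cong refl) (simp only: monomial_on_X_eq_ratio_monomial[OF assms True])
      then show ?thesis
        using True by (simp add: sum_fun_apply eval_form_def sum_divide_distrib)
    qed (simp add: sum_fun_apply ratio_monomial_def)
  qed
  then have "(code_CX n s E d :: ((nat \<Rightarrow> 'k) set \<Rightarrow> 'k) set)
      = range (\<lambda>c. \<Sum>a\<in>monomials s d. (\<lambda>P. c a * ratio_monomial n s E (odd_exponents s a) P))"
    unfolding code_CX_def proj_rep_def[symmetric] by auto
  also have "\<dots> = fun_vs.span ((ratio_monomial n s E \<circ> odd_exponents s) ` monomials s d)"
    by (simp add: fun_vs.span_image_finite finite_monomials)
  also have "\<dots> = fun_vs.span (ratio_monomial n s E ` parity_sets s d)"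
    by (simp only: image_comp[symmetric] odd_exponents_monomials[OF assms(3)])
  finally show ?thesis .
qed

theorem mainTheorem4:
  fixes n s :: nat and E :: "nat \<Rightarrow> nat set" and d :: nat
  assumes K3: "CARD('k::field) = 3"
    and simple: "simple_graph n s E"
    and s_pos: "s \<ge> 1"
    and no_even_eulerian: "\<not> (\<exists>I. eulerian_edge_set n s E I \<and> I \<noteq> {} \<and> even (card I))"
  shows "fun_vs.dim (code_CX n s E d :: ((nat \<Rightarrow> 'k) set \<Rightarrow> 'k) set)
           = (\<Sum>i\<le>d div 2. s choose (d - 2 * i))"
proof -
  let ?g = "ratio_monomial n s E :: nat set \<Rightarrow> (nat \<Rightarrow> 'k) set \<Rightarrow> 'k"
  have "0 < s"
    using s_pos by simp
  have two: "(2::'k) \<noteq> 0"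
    using card3_field_two_neq_zero[OF K3] .
  then have "(2::'k) ^ n \<noteq> 0"
    by simp
  note family = fun_vs_orthogonal_family[where I = "parity_sets s d" and g = ?g
      and T = "sign_torus n" and p = "\<lambda>x. proj_class (edge_point s E x)",
      OF ratio_monomial_orthonormal[OF simple \<open>0 < s\<close> two no_even_eulerian] this]
  have "fun_vs.dim (code_CX n s E d :: ((nat \<Rightarrow> 'k) set \<Rightarrow> 'k) set)
      = fun_vs.dim (fun_vs.span (?g ` parity_sets s d))"
    by (simp add: code_CX_eq_span[OF K3 simple \<open>0 < s\<close>])
  also have "\<dots> = card (?g ` parity_sets s d)"
    using family(2) by (rule fun_vs.dim_span_eq_card_independent)
  also have "\<dots> = card (parity_sets s d)"
    using family(1) by (rule card_image)
  finally show ?thesis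
    using card_parity_sets by simp
qed

end
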